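(* For every $d \in \mathbb{Z}_{>0}$, one has $\mathrm{rc}_\ell(\Delta_d) \le \lceil d/2 \rceil + 2$, where $\Delta_d = \{0, e_1, \dots, e_d\} \subseteq \mathbb{Z}^d$.
   Context: For $X, Y \subseteq \mathbb{Z}^d$, $\mathrm{rc}(X,Y)$ is the smallest number of inequalities in a linear system $Ax \le b$ satisfied by all points of $X$ and such that each point of $Y\setminus X$ violates at least one inequality. With $B_t = [-t,t]^d\cap\mathbb{Z}^d$, $\mathrm{rc}_\ell(X) = \max_{t\in\mathbb{Z}_{>0}} \mathrm{rc}(X,B_t)$. $e_i$ denotes the $i$-th standard unit vector. *)

theory Defs
  imports Complex_Main "HOL-Library.Extended_Nat"
begin

text \<open>Points of Z^d are modelled as functions nat => int vanishing at indices >= d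
  (coordinates 0..d-1). Inequalities have real coefficients.\<close>

definition inZd :: "nat \<Rightarrow> (nat \<Rightarrow> int) \<Rightarrow> bool" where
  "inZd d x \<longleftrightarrow> (\<forall>i\<ge>d. x i = 0)"

definition box :: "nat \<Rightarrow> int \<Rightarrow> (nat \<Rightarrow> int) set" where
  "box d t = {x. inZd d x \<and> (\<forall>i<d. \<bar>x i\<bar> \<le> t)}"

definition rc_system :: "nat \<Rightarrow> (nat \<Rightarrow> int) set \<Rightarrow> (nat \<Rightarrow> int) set \<Rightarrow> nat \<Rightarrow> bool" where
  "rc_system d X Y k \<longleftrightarrow>
     (\<exists>(A :: nat \<Rightarrow> nat \<Rightarrow> real) (b :: nat \<Rightarrow> real).
        (\<forall>x\<in>X. \<forall>j<k. (\<Sum>i<d. A j i * of_int (x i)) \<le> b j) \<and>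
        (\<forall>y\<in>Y - X. \<exists>j<k. (\<Sum>i<d. A j i * of_int (y i)) > b j))"

definition rc :: "nat \<Rightarrow> (nat \<Rightarrow> int) set \<Rightarrow> (nat \<Rightarrow> int) set \<Rightarrow> enat" where
  "rc d X Y = (INF k \<in> {k. rc_system d X Y k}. enat k)"

definition rc_l :: "nat \<Rightarrow> (nat \<Rightarrow> int) set \<Rightarrow> enat" where
  "rc_l d X = (SUP t \<in> {t::int. t > 0}. rc d X (box d t))"

definition unit_vec :: "nat \<Rightarrow> nat \<Rightarrow> int" where
  "unit_vec j = (\<lambda>i. if i = j then 1 else 0)"

definition Delta :: "nat \<Rightarrow> (nat \<Rightarrow> int) set" where
  "Delta d = insert (\<lambda>_. 0) (unit_vec ` {..<d})"

end

theory Submission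
  imports Defs
begin

(* For a box of half-width t, let N exceed 2 d (t+1)^d t. Besides the rows
   (t+1) x_(2k) + x_(2k+1) >= 0, one per pair of coordinates (indices from 0), which force
   every even coordinate of a box point to be nonnegative and an odd one to be nonnegative
   unless its even partner is positive, the system has the two rows
     N (E + O) + P - (t+1)^d O <= N   and   N (E + O) - 2 N O - P <= N,
   where E and O are the sums of the even and odd coordinates and P = sum_(i odd) (t+1)^i x_i. Since N dominates |P| and |(t+1)^d O|, the two big rows give
   E + O <= 1 and E - O <= 1, so E is 0 or 1. If E = 0 all coordinates are nonnegative; if
   E = 1 then O = 0 and the big rows force P = 0, so every odd coordinate vanishes by
   uniqueness of base-(t+1) digits of absolute value at most t. Either way the point is
   nonnegative with coordinate sum at most 1, i.e. it lies in Delta_d. *)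

lemma rc_l_le_if_rc_system:
  assumes "\<And>t. t > 0 \<Longrightarrow> rc_system d X (box d t) k"
  shows "rc_l d X \<le> enat k"
  unfolding rc_l_def rc_def using assms by (intro SUP_least INF_lower2) auto

lemma rc_system_of_int:
  fixes A :: "nat \<Rightarrow> nat \<Rightarrow> int" and b :: "nat \<Rightarrow> int"
  assumes "\<forall>x\<in>X. \<forall>j<k. (\<Sum>i<d. A j i * x i) \<le> b j"
    and "\<forall>y\<in>Y - X. \<exists>j<k. (\<Sum>i<d. A j i * y i) > b j"
  shows "rc_system d X Y k"
  unfolding rc_system_def
proof (intro exI conjI)
  show "\<forall>x\<in>X. \<forall>j<k. (\<Sum>i<d. of_int (A j i) * of_int (x i)) \<le> real_of_int (b j)"
    and "\<forall>y\<in>Y - X. \<exists>j<k. (\<Sum>i<d. of_int (A j i) * of_int (y i)) > real_of_int (b j)"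
    using assms unfolding of_int_mult[symmetric] of_int_sum[symmetric] of_int_le_iff of_int_less_iff .
qed

lemma sum_le_on_Delta:
  fixes a :: "nat \<Rightarrow> int"
  assumes "x \<in> Delta d" "\<forall>i<d. a i \<le> c" "0 \<le> c"
  shows "(\<Sum>i<d. a i * x i) \<le> c"
  using assms unfolding Delta_def unit_vec_def by (auto simp: if_distrib cong: if_cong)

lemma in_Delta_if_nonneg_sum_le_1:
  assumes "inZd d y" "\<forall>i<d. 0 \<le> y i" "(\<Sum>i<d. y i) \<le> 1"
  shows "y \<in> Delta d"
proof (cases "\<forall>i<d. y i = 0")
  case True
  then have "y = (\<lambda>_. 0)" using assms(1) unfolding inZd_def by (metis not_le)
  then show ?thesis unfolding Delta_def by simp
next
  case False
  then obtain j where j: "j < d" "y j \<noteq> 0" by blast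
  have rest_nonneg: "0 \<le> (\<Sum>i\<in>{..<d} - {j}. y i)"
    using assms(2) by (intro sum_nonneg) auto
  have "(\<Sum>i<d. y i) = y j + (\<Sum>i\<in>{..<d} - {j}. y i)"
    using j(1) by (simp add: sum.remove)
  moreover have "1 \<le> y j" using j assms(2) by force
  ultimately have yj: "y j = 1" and "(\<Sum>i\<in>{..<d} - {j}. y i) = 0"
    using rest_nonneg assms(3) by linarith+
  then have "\<forall>i\<in>{..<d} - {j}. y i = 0"
    using assms(2) by (subst (asm) sum_nonneg_eq_0_iff) auto
  then have "y i = unit_vec j i" for i
    using yj assms(1) unfolding unit_vec_def inZd_def by (cases "i < d") auto
  then have "y = unit_vec j" by blast
  then show ?thesis using j(1) unfolding Delta_def by simp
qed

lemma digits_eq_0_if_sum_eq_0: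
  fixes M :: int and z :: "nat \<Rightarrow> int"
  assumes "\<forall>k<n. \<bar>z k\<bar> < M" "(\<Sum>k<n. M ^ k * z k) = 0"
  shows "\<forall>k<n. z k = 0"
  using assms
proof (induction n arbitrary: z)
  case 0
  then show ?case by simp
next
  case (Suc n)
  define S where "S = (\<Sum>k<n. M ^ k * z (Suc k))"
  have "(\<Sum>k<Suc n. M ^ k * z k) = z 0 + M * S"
    unfolding S_def sum.lessThan_Suc_shift by (simp add: sum_distrib_left mult.assoc)
  then have z0: "z 0 = - M * S" using Suc.prems(2) by simp
  have z0_bound: "\<bar>z 0\<bar> < M" using Suc.prems(1) by simp
  then have "0 < M" by linarith
  have "S = 0"
  proof (rule ccontr)
    assume "S \<noteq> 0"
    then have "M \<le> M * \<bar>S\<bar>"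
      using \<open>0 < M\<close> mult_left_mono[of 1 "\<bar>S\<bar>" M] by simp
    also have "\<dots> = \<bar>z 0\<bar>"
      unfolding z0 abs_minus abs_mult using \<open>0 < M\<close> by simp
    finally show False using z0_bound by linarith
  qed
  have "\<forall>k<n. z (Suc k) = 0"
  proof (rule Suc.IH[of "\<lambda>k. z (Suc k)"])
    show "\<forall>k<n. \<bar>z (Suc k)\<bar> < M" using Suc.prems(1) by simp
    show "(\<Sum>k<n. M ^ k * z (Suc k)) = 0" using \<open>S = 0\<close> unfolding S_def .
  qed
  moreover have "z 0 = 0" using z0 \<open>S = 0\<close> by simp
  ultimately show ?case by (metis less_Suc_eq_0_disj)
qed

lemma nonneg_if_pair_row_nonneg:
  fixes a c t :: int
  assumes "\<bar>c\<bar> \<le> t" "0 \<le> (t + 1) * a + c"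
  shows "0 \<le> a" and "a = 0 \<Longrightarrow> 0 \<le> c"
proof -
  show "0 \<le> a"
  proof (rule ccontr)
    assume "\<not> 0 \<le> a"
    then have "(t + 1) * a \<le> - (t + 1)"
      using assms(1) mult_left_mono[of a "-1" "t + 1"] by simp
    then show False using assms by linarith
  qed
  show "a = 0 \<Longrightarrow> 0 \<le> c" using assms(2) by simp
qed

lemma le_1_if_dominant_row:
  fixes N u r :: int
  assumes "N * u + r \<le> N" "\<bar>r\<bar> < N"
  shows "u \<le> 1"
proof (rule ccontr)
  assume "\<not> u \<le> 1"
  then have "N * 2 \<le> N * u" using assms(2) by (intro mult_left_mono) auto
  then show False using assms by linarith
qed

lemma abs_sum_lessThan_le:
  fixes f :: "nat \<Rightarrow> 'a::linordered_idom"
  assumes "\<And>i. i < d \<Longrightarrow> \<bar>f i\<bar> \<le> c"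
  shows "\<bar>\<Sum>i<d. f i\<bar> \<le> of_nat d * c"
proof -
  have "\<bar>\<Sum>i<d. f i\<bar> \<le> (\<Sum>i<d. \<bar>f i\<bar>)" by (rule sum_abs)
  also have "\<dots> \<le> of_nat (card {..<d}) * c" using assms by (intro sum_bounded_above) simp
  finally show ?thesis by simp
qed

lemma abs_sum_power_mult_le:
  fixes z :: "nat \<Rightarrow> int"
  assumes "1 \<le> M" "\<And>i. \<bar>z i\<bar> \<le> t"
  shows "\<bar>\<Sum>i<d. M ^ i * z i\<bar> \<le> int d * (M ^ d * t)"
proof (rule abs_sum_lessThan_le)
  fix i assume "i < d"
  then have "M ^ i \<le> M ^ d" using \<open>1 \<le> M\<close> by (intro power_increasing) auto
  then show "\<bar>M ^ i * z i\<bar> \<le> M ^ d * t"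
    using assms by (simp add: abs_mult mult_mono)
qed

lemma nonneg_if_pair_rows_nonneg:
  fixes y :: "nat \<Rightarrow> int"
  assumes y: "inZd d y" "\<And>i. \<bar>y i\<bar> \<le> t"
    and pairs: "\<And>k. 2 * k < d \<Longrightarrow> 0 \<le> (t + 1) * y (2 * k) + y (2 * k + 1)"
  shows "even i \<Longrightarrow> 0 \<le> y i" and "odd i \<Longrightarrow> y (i - 1) = 0 \<Longrightarrow> 0 \<le> y i"
proof -
  have outside: "y i = 0" if "\<not> i < d" for i using y(1) that unfolding inZd_def by simp
  show "0 \<le> y i" if "even i"
  proof (cases "i < d")
    case True
    obtain k where "i = 2 * k" using \<open>even i\<close> by blast
    then show ?thesis using nonneg_if_pair_row_nonneg(1)[OF y(2) pairs] True by blast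
  qed (use outside in simp)
  show "0 \<le> y i" if "odd i" "y (i - 1) = 0"
  proof (cases "i < d")
    case True
    obtain k where "i = 2 * k + 1" using \<open>odd i\<close> oddE by blast
    then show ?thesis using nonneg_if_pair_row_nonneg(2)[OF y(2) pairs] True that by simp
  qed (use outside in simp)
qed

lemma dominant_rows_cases:
  fixes N Ev Od P B :: int
  assumes row0: "N * (Ev + Od) + P - B * Od \<le> N"
    and row1: "N * (Ev + Od) - 2 * N * Od - P \<le> N"
    and small: "\<bar>P\<bar> + \<bar>B * Od\<bar> < N" and "0 \<le> Ev"
  shows "Ev + Od \<le> 1" and "Ev = 0 \<or> Ev = 1 \<and> Od = 0 \<and> P = 0"
proof -
  show "Ev + Od \<le> 1"
  proof (rule le_1_if_dominant_row)
    show "N * (Ev + Od) + (P - B * Od) \<le> N" using row0 by simp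
    show "\<bar>P - B * Od\<bar> < N" using small by linarith
  qed
  moreover have "Ev - Od \<le> 1"
  proof (rule le_1_if_dominant_row)
    show "N * (Ev - Od) + - P \<le> N" using row1 by (simp add: algebra_simps)
    show "\<bar>- P\<bar> < N" using small by linarith
  qed
  ultimately have "Ev = 0 \<or> Ev = 1 \<and> Od = 0" using \<open>0 \<le> Ev\<close> by linarith
  then show "Ev = 0 \<or> Ev = 1 \<and> Od = 0 \<and> P = 0" using row0 row1 by auto
qed

lemma in_Delta_if_cut_inequalities:
  fixes d :: nat and y :: "nat \<Rightarrow> int" and t N :: int
  defines "Od \<equiv> \<Sum>i<d. if odd i then y i else 0"
    and "P \<equiv> \<Sum>i<d. (t + 1) ^ i * (if odd i then y i else 0)"
  assumes y: "y \<in> box d t" and "0 \<le> t"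
    and N: "2 * (int d * ((t + 1) ^ d * t)) < N"
    and pairs: "\<And>k. 2 * k < d \<Longrightarrow> 0 \<le> (t + 1) * y (2 * k) + y (2 * k + 1)"
    and row0: "N * (\<Sum>i<d. y i) + P - (t + 1) ^ d * Od \<le> N"
    and row1: "N * (\<Sum>i<d. y i) - 2 * N * Od - P \<le> N"
  shows "y \<in> Delta d"
proof -
  have yZ: "inZd d y" and y_bound: "\<bar>y i\<bar> \<le> t" for i
    using y \<open>0 \<le> t\<close> unfolding box_def inZd_def by (cases "i < d"; force)+
  note coord_nonneg = nonneg_if_pair_rows_nonneg[OF yZ y_bound pairs]
  define Ev where "Ev = (\<Sum>i<d. if even i then y i else 0)"
  have sum_y: "(\<Sum>i<d. y i) = Ev + Od"
    unfolding Ev_def Od_def sum.distrib[symmetric] by (rule sum.cong) auto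
  have P_bound: "\<bar>P\<bar> \<le> int d * ((t + 1) ^ d * t)"
    unfolding P_def using \<open>0 \<le> t\<close> y_bound by (intro abs_sum_power_mult_le) auto
  have "\<bar>Od\<bar> \<le> int d * t"
    unfolding Od_def using y_bound \<open>0 \<le> t\<close> by (intro abs_sum_lessThan_le) simp
  then have Od_bound: "\<bar>(t + 1) ^ d * Od\<bar> \<le> int d * ((t + 1) ^ d * t)"
    using \<open>0 \<le> t\<close> mult_left_mono[of "\<bar>Od\<bar>" "int d * t" "(t + 1) ^ d"] by (simp add: abs_mult)
  have small: "\<bar>P\<bar> + \<bar>(t + 1) ^ d * Od\<bar> < N" using P_bound Od_bound N by linarith
  have "0 \<le> Ev" unfolding Ev_def using coord_nonneg(1) by (intro sum_nonneg) simp
  note sums = dominant_rows_cases[OF row0[unfolded sum_y] row1[unfolded sum_y] small this]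
  from sums(2) consider "Ev = 0" | "Ev = 1" "Od = 0" "P = 0" by blast
  then have odd_nonneg: "0 \<le> y i" if "i < d" "odd i" for i
  proof cases
    case 1
    then have "y j = 0" if "j < d" "even j" for j
      using that coord_nonneg(1) unfolding Ev_def by (subst (asm) sum_nonneg_eq_0_iff) force+
    then show ?thesis using coord_nonneg(2) that by simp
  next
    case 2
    then have "\<forall>k<d. (if odd k then y k else 0) = 0"
      using y_bound \<open>0 \<le> t\<close> unfolding P_def by (intro digits_eq_0_if_sum_eq_0) auto
    then show ?thesis using that by auto
  qed
  have "0 \<le> y i" if "i < d" for i
    using coord_nonneg(1) odd_nonneg that by blast
  then show ?thesis
    using in_Delta_if_nonneg_sum_le_1[OF yZ] sum_y sums(1) by simp
qed

definition cut_weight :: "nat \<Rightarrow> int \<Rightarrow> int" where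
  "cut_weight d t = 2 * (int d * ((t + 1) ^ d * t)) + 1"

definition cut_matrix :: "nat \<Rightarrow> int \<Rightarrow> nat \<Rightarrow> nat \<Rightarrow> int" where
  "cut_matrix d t j i =
    (if j = 0 then cut_weight d t + (if odd i then (t + 1) ^ i - (t + 1) ^ d else 0)
     else if j = 1 then cut_weight d t - (if odd i then 2 * cut_weight d t + (t + 1) ^ i else 0)
     else if i = 2 * (j - 2) then - (t + 1) else if i = 2 * (j - 2) + 1 then -1 else 0)"

definition cut_rhs :: "nat \<Rightarrow> int \<Rightarrow> nat \<Rightarrow> int" where
  "cut_rhs d t j = (if j \<le> 1 then cut_weight d t else 0)"

lemma cut_weight_pos: "0 \<le> t \<Longrightarrow> 0 < cut_weight d t"
  unfolding cut_weight_def by simp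

lemma cut_matrix_valid_on_Delta:
  assumes "0 \<le> t" "x \<in> Delta d"
  shows "(\<Sum>i<d. cut_matrix d t j i * x i) \<le> cut_rhs d t j"
proof (rule sum_le_on_Delta[OF \<open>x \<in> Delta d\<close>])
  have N_pos: "0 < cut_weight d t" using \<open>0 \<le> t\<close> by (rule cut_weight_pos)
  have "(t + 1) ^ i \<le> (t + 1) ^ d" if "i < d" for i
    using that \<open>0 \<le> t\<close> by (intro power_increasing) auto
  moreover have "0 \<le> (t + 1) ^ i" for i using \<open>0 \<le> t\<close> by simp
  ultimately show "\<forall>i<d. cut_matrix d t j i \<le> cut_rhs d t j"
    using N_pos \<open>0 \<le> t\<close> unfolding cut_matrix_def cut_rhs_def by auto
  show "0 \<le> cut_rhs d t j" using N_pos unfolding cut_rhs_def by simp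
qed

lemma sum_cut_matrix_0:
  "(\<Sum>i<d. cut_matrix d t 0 i * y i) =
     cut_weight d t * (\<Sum>i<d. y i) + (\<Sum>i<d. (t + 1) ^ i * (if odd i then y i else 0))
     - (t + 1) ^ d * (\<Sum>i<d. if odd i then y i else 0)"
proof -
  have "(\<Sum>i<d. cut_matrix d t 0 i * y i) = (\<Sum>i<d. cut_weight d t * y i
      + (t + 1) ^ i * (if odd i then y i else 0) - (t + 1) ^ d * (if odd i then y i else 0))"
    unfolding cut_matrix_def by (rule sum.cong) (auto simp: algebra_simps)
  then show ?thesis by (simp add: sum.distrib sum_subtractf sum_distrib_left)
qed

lemma sum_cut_matrix_1:
  "(\<Sum>i<d. cut_matrix d t 1 i * y i) =
     cut_weight d t * (\<Sum>i<d. y i) - 2 * cut_weight d t * (\<Sum>i<d. if odd i then y i else 0)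
     - (\<Sum>i<d. (t + 1) ^ i * (if odd i then y i else 0))"
proof -
  have "(\<Sum>i<d. cut_matrix d t 1 i * y i) = (\<Sum>i<d. cut_weight d t * y i
      - 2 * cut_weight d t * (if odd i then y i else 0) - (t + 1) ^ i * (if odd i then y i else 0))"
    unfolding cut_matrix_def by (rule sum.cong) (auto simp: algebra_simps)
  then show ?thesis by (simp add: sum.distrib sum_subtractf sum_distrib_left)
qed

lemma sum_cut_matrix_pair:
  assumes "inZd d y" "2 * k < d"
  shows "(\<Sum>i<d. cut_matrix d t (k + 2) i * y i) = - ((t + 1) * y (2 * k) + y (2 * k + 1))"
proof -
  have "(\<Sum>i<d. cut_matrix d t (k + 2) i * y i)
      = (\<Sum>i<d. if i = 2 * k then - (t + 1) * y i else 0)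
        + (\<Sum>i<d. if i = 2 * k + 1 then - y i else 0)"
    unfolding sum.distrib[symmetric] cut_matrix_def by (rule sum.cong) auto
  also have "\<dots> = - ((t + 1) * y (2 * k) + y (2 * k + 1))"
    using assms unfolding inZd_def by (auto simp: algebra_simps)
  finally show ?thesis .
qed

lemma rc_system_Delta_box:
  assumes "0 \<le> t"
  shows "rc_system d (Delta d) (box d t) ((d + 1) div 2 + 2)"
proof (rule rc_system_of_int[where A = "cut_matrix d t" and b = "cut_rhs d t"], safe)
  fix x j assume "x \<in> Delta d"
  then show "(\<Sum>i<d. cut_matrix d t j i * x i) \<le> cut_rhs d t j"
    using cut_matrix_valid_on_Delta \<open>0 \<le> t\<close> by blast
next
  fix y assume y: "y \<in> box d t" "y \<notin> Delta d"
  then have "inZd d y" unfolding box_def by simp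
  show "\<exists>j<(d + 1) div 2 + 2. cut_rhs d t j < (\<Sum>i<d. cut_matrix d t j i * y i)"
  proof (rule ccontr)
    assume "\<not> ?thesis"
    then have rows: "(\<Sum>i<d. cut_matrix d t j i * y i) \<le> cut_rhs d t j"
      if "j < (d + 1) div 2 + 2" for j
      using that not_less by blast
    have "y \<in> Delta d"
    proof (rule in_Delta_if_cut_inequalities[OF y(1) \<open>0 \<le> t\<close>, of "cut_weight d t"])
      show "2 * (int d * ((t + 1) ^ d * t)) < cut_weight d t" unfolding cut_weight_def by simp
      show "0 \<le> (t + 1) * y (2 * k) + y (2 * k + 1)" if "2 * k < d" for k
      proof -
        have "k + 2 < (d + 1) div 2 + 2" using that by simp
        then show ?thesis
          using rows[of "k + 2"] sum_cut_matrix_pair[OF \<open>inZd d y\<close> that]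
          unfolding cut_rhs_def by simp
      qed
    qed (use rows[of 0, unfolded sum_cut_matrix_0] rows[of 1, unfolded sum_cut_matrix_1] in
        \<open>simp_all add: cut_rhs_def\<close>)
    with y(2) show False ..
  qed
qed

lemma nat_ceiling_half: "nat \<lceil>real d / 2\<rceil> = (d + 1) div 2"
proof -
  have "\<lceil>real d / 2\<rceil> = - (- int d div 2)"
    using ceiling_divide_eq_div[of "int d" 2] by simp
  then show ?thesis by simp
qed

theorem theorem3p4:
  fixes d :: nat
  assumes "d > 0"
  shows "rc_l d (Delta d) \<le> enat (nat \<lceil>real d / 2\<rceil> + 2)"
  unfolding nat_ceiling_half
  by (rule rc_l_le_if_rc_system, rule rc_system_Delta_box) simp

end
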